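(* For every $k\ge0$, \[ \psi_k(z)=\frac{t^{k+1}}{z^{2k+1}(1-t)}\cdot\frac{\mu_3^{k+1}-\mu_2^{k+1}}{\mu_3-\mu_2} =\frac{t^{k+1}}{z^{2k+1}(1-t)}\sum_{i=0}^{\lfloor k/2\rfloor}(-1)^i\binom{k-i}{i}(2-t)^{k-2i}(1-t)^{2i}, \] and $\varphi_0(z)=\dfrac1{1-t}$, $\varphi_k(z)=\dfrac1z\psi_{k-1}(z)-\psi_{k-2}(z)$ for $k\ge1$ (with $\psi_{-1}=0$).
   Context: The numbers $c_{n,k},d_{n,k}$ ($n,k\ge0$) count partial reverse S-Motzkin paths (S-Motzkin paths read from right to left, stopped after $n$ steps) ending at height $k$ whose last non-up step is a level step, resp. a down step; equivalently they are defined by $c_{0,0}=1$, $d_{0,0}=0$, $c_{0,k}=d_{0,k}=0$ for $k\ge1$, and for $n\ge1$, $k\ge0$: $c_{n,k}=c_{n-1,k-1}+d_{n-1,k}$, $d_{n,k}=d_{n-1,k-1}+c_{n-1,k+1}$, with $c_{n-1,-1}=d_{n-1,-1}=0$. $\varphi_k(z)=\sum_{n\ge0}c_{n,k}z^n$, $\psi_k(z)=\sum_{n\ge0}d_{n,k}z^n$. $t$ is the power series in $z$ with $z^3=t(1-t)^2$, $t=z^3+O(z^6)$; $\mu_2,\mu_3$ are the roots of $X^2-(2-t)X+(1-t)^2$ (explicitly $\mu_{2,3}=(2-t\mp\sqrt{4t-3t^2})/2$). *)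

theory Defs
  imports "HOL-Computational_Algebra.Formal_Power_Series"
begin

text \<open>The counting numbers c(n,k), d(n,k) (n steps, height k).\<close>
fun cc :: "nat \<Rightarrow> nat \<Rightarrow> nat" and dd :: "nat \<Rightarrow> nat \<Rightarrow> nat" where
  "cc 0 k = (if k = 0 then 1 else 0)"
| "cc (Suc n) k = (if k = 0 then 0 else cc n (k - 1)) + dd n k"
| "dd 0 k = 0"
| "dd (Suc n) k = (if k = 0 then 0 else dd n (k - 1)) + cc n (k + 1)"

definition phi :: "nat \<Rightarrow> real fps" where
  "phi k = Abs_fps (\<lambda>n. real (cc n k))"

definition psi :: "nat \<Rightarrow> real fps" where
  "psi k = Abs_fps (\<lambda>n. real (dd n k))"

end

theory Submission
  imports Defs
begin

text \<open>
Put g = 1/(1 - t) and let U_n be the Lucas sequence U_0 = 0, U_1 = 1,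
U_(n+2) = (2 - t) U_(n+1) - (1 - t)^2 U_n, whose characteristic roots are mu_2, mu_3.
Read as functional equations, the recurrences for c and d determine phi_k and psi_k
coefficientwise, and they are satisfied by psi_k = z^(k+2) g^(2k+3) U_(k+1), phi_0 = g and
phi_(k+1) = z^(k+1) g^(2k+3) (U_(k+1) - (1 - t)^2 U_k): after cancelling powers of z g^2 this
only needs z^3 g^2 = t and the Lucas recurrence. The same identity z^3 g^2 = t turns the
prefactor of psi_k into t^(k+1) / (z^(2k+1) (1 - t)), and U_(k+1) equals both the binomial sum
and (mu_3^(k+1) - mu_2^(k+1)) / (mu_3 - mu_2). Since sqrt(4t - 3t^2) is a series in z^(3/2),
the roots mu_2, mu_3 only exist after substituting z^2 for z.
\<close>

fun lucas_U :: "'a::comm_ring_1 \<Rightarrow> 'a \<Rightarrow> nat \<Rightarrow> 'a" where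
  "lucas_U s p 0 = 0"
| "lucas_U s p (Suc 0) = 1"
| "lucas_U s p (Suc (Suc n)) = s * lucas_U s p (Suc n) - p * lucas_U s p n"

lemma lucas_U_roots: "(b - a) * lucas_U (a + b) (a * b) n = b ^ n - a ^ n"
proof (induction n rule: induct_nat_012)
  case (ge2 n)
  have "(b - a) * lucas_U (a + b) (a * b) (Suc (Suc n))
      = (a + b) * ((b - a) * lucas_U (a + b) (a * b) (Suc n))
        - a * b * ((b - a) * lucas_U (a + b) (a * b) n)"
    by (simp add: algebra_simps)
  also have "\<dots> = b ^ Suc (Suc n) - a ^ Suc (Suc n)"
    unfolding ge2 by (simp add: algebra_simps)
  finally show ?case .
qed simp_all

lemma lucas_U_fps_compose:
  fixes s p c :: "'a::idom fps"
  assumes "fps_nth c 0 = 0"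
  shows "lucas_U s p n oo c = lucas_U (s oo c) (p oo c) n"
  by (induction s p n rule: lucas_U.induct)
     (simp_all add: fps_compose_sub_distrib fps_compose_mult_distrib[OF assms])

definition lucas_U_coeff :: "'a::comm_ring_1 \<Rightarrow> 'a \<Rightarrow> nat \<Rightarrow> nat \<Rightarrow> 'a" where
  "lucas_U_coeff s p n i = (-1) ^ i * of_nat ((n - i) choose i) * s ^ (n - 2 * i) * p ^ i"

lemma lucas_U_coeff_eq_0: "n < 2 * i \<Longrightarrow> lucas_U_coeff s p n i = 0"
  by (simp add: lucas_U_coeff_def binomial_eq_0)

lemma lucas_U_coeff_Suc_Suc:
  "lucas_U_coeff s p (Suc (Suc n)) (Suc i)
     = s * lucas_U_coeff s p (Suc n) (Suc i) - p * lucas_U_coeff s p n i"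
proof (cases "i \<le> n")
  case True
  then have pascal: "(Suc n - i) choose Suc i = ((n - i) choose Suc i) + ((n - i) choose i)"
    by (simp add: Suc_diff_le)
  show ?thesis
  proof (cases "2 * i < n")
    case True
    then have "Suc n - 2 * Suc i = n - 2 * i - 1" "n - 2 * i = Suc (n - 2 * i - 1)" by auto
    with pascal show ?thesis by (simp add: lucas_U_coeff_def algebra_simps)
  next
    case False
    then have "(n - i) choose Suc i = 0" by simp
    with pascal show ?thesis by (simp add: lucas_U_coeff_def algebra_simps del: binomial_eq_0_iff)
  qed
qed (cases i, simp_all add: lucas_U_coeff_def)

lemma sum_lucas_U_coeff: "n < 2 * N \<Longrightarrow> (\<Sum>i<N. lucas_U_coeff s p n i) = lucas_U s p (Suc n)"
proof (induction n arbitrary: N rule: induct_nat_012)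
  case 0
  then obtain M where N: "N = Suc M" by (cases N) auto
  show ?case
    unfolding N sum.lessThan_Suc_shift by (simp add: lucas_U_coeff_eq_0) (simp add: lucas_U_coeff_def)
next
  case 1
  then obtain M where N: "N = Suc M" by (cases N) auto
  show ?case
    unfolding N sum.lessThan_Suc_shift by (simp add: lucas_U_coeff_eq_0) (simp add: lucas_U_coeff_def)
next
  case (ge2 n)
  then obtain M where N: "N = Suc M" by (cases N) auto
  have "(\<Sum>i<N. lucas_U_coeff s p (Suc (Suc n)) i)
      = lucas_U_coeff s p (Suc (Suc n)) 0 + (\<Sum>i<M. lucas_U_coeff s p (Suc (Suc n)) (Suc i))"
    unfolding N by (rule sum.lessThan_Suc_shift)
  also have "\<dots> = s * (lucas_U_coeff s p (Suc n) 0 + (\<Sum>i<M. lucas_U_coeff s p (Suc n) (Suc i)))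
      - p * (\<Sum>i<M. lucas_U_coeff s p n i)"
    by (simp add: lucas_U_coeff_Suc_Suc sum_subtractf sum_distrib_left algebra_simps)
      (simp add: lucas_U_coeff_def)
  also have "lucas_U_coeff s p (Suc n) 0 + (\<Sum>i<M. lucas_U_coeff s p (Suc n) (Suc i))
      = (\<Sum>i<N. lucas_U_coeff s p (Suc n) i)"
    unfolding N by (rule sum.lessThan_Suc_shift[symmetric])
  finally have split: "(\<Sum>i<N. lucas_U_coeff s p (Suc (Suc n)) i)
      = s * (\<Sum>i<N. lucas_U_coeff s p (Suc n) i) - p * (\<Sum>i<M. lucas_U_coeff s p n i)" .
  have "Suc n < 2 * N" "n < 2 * M" using ge2.prems N by simp_all
  then show ?case unfolding split by (simp add: ge2.IH)
qed

lemma lucas_U_eq_sum: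
  "lucas_U s p (Suc k)
     = (\<Sum>i = 0..k div 2. (-1) ^ i * of_nat ((k - i) choose i) * s ^ (k - 2 * i) * p ^ i)"
proof -
  have "{0..k div 2} = {..<Suc (k div 2)}" by auto
  then show ?thesis using sum_lucas_U_coeff[of k "Suc (k div 2)" s p] by (simp add: lucas_U_coeff_def)
qed

lemma phi_psi_eqI:
  fixes F G :: "nat \<Rightarrow> real fps"
  assumes F_0: "F 0 = 1 + fps_X * G 0"
    and F_Suc: "\<And>k. F (Suc k) = fps_X * F k + fps_X * G (Suc k)"
    and G_0: "G 0 = fps_X * F 1"
    and G_Suc: "\<And>k. G (Suc k) = fps_X * G k + fps_X * F (Suc (Suc k))"
  shows "phi = F" and "psi = G"
proof -
  have G_nth_0: "fps_nth (G k) 0 = 0" for k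
    by (cases k) (simp_all add: G_0 G_Suc)
  have nth_0: "fps_nth (F 0) 0 = 1" "fps_nth (F (Suc k)) 0 = 0" for k
    by (subst F_0 F_Suc, simp add: G_nth_0)+
  have nth_Suc: "fps_nth (F 0) (Suc n) = fps_nth (G 0) n"
    "fps_nth (F (Suc k)) (Suc n) = fps_nth (F k) n + fps_nth (G (Suc k)) n"
    "fps_nth (G 0) (Suc n) = fps_nth (F 1) n"
    "fps_nth (G (Suc k)) (Suc n) = fps_nth (G k) n + fps_nth (F (Suc (Suc k))) n" for k n
    by (subst F_0 F_Suc G_0 G_Suc, simp)+
  have "fps_nth (F k) n = real (cc n k) \<and> fps_nth (G k) n = real (dd n k)" for n k
  proof (induction n arbitrary: k)
    case 0
    show ?case by (cases k) (simp_all add: G_nth_0 nth_0)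
  next
    case (Suc n)
    show ?case by (cases k) (simp_all add: nth_Suc Suc.IH)
  qed
  then show "phi = F" "psi = G"
    by (auto intro!: fps_ext simp: phi_def psi_def)
qed

definition psi_closed :: "'a::field fps \<Rightarrow> nat \<Rightarrow> 'a fps" where
  "psi_closed t k = (fps_X * inverse (1 - t) ^ 2) ^ k * fps_X ^ 2 * inverse (1 - t) ^ 3
     * lucas_U (2 - t) ((1 - t) ^ 2) (Suc k)"

fun phi_closed :: "'a::field fps \<Rightarrow> nat \<Rightarrow> 'a fps" where
  "phi_closed t 0 = inverse (1 - t)"
| "phi_closed t (Suc k) = (fps_X * inverse (1 - t) ^ 2) ^ k * fps_X * inverse (1 - t) ^ 3
     * (lucas_U (2 - t) ((1 - t) ^ 2) (Suc k) - (1 - t) ^ 2 * lucas_U (2 - t) ((1 - t) ^ 2) k)"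

lemma psi_closed_0_eq: "psi_closed t 0 = fps_X * phi_closed t 1"
  by (simp add: psi_closed_def power2_eq_square)

context
  fixes t :: "'a::field fps"
  assumes t_cubic: "fps_X ^ 3 = t * (1 - t) ^ 2"
    and t_nth_0: "fps_nth t 0 = 0"
begin

lemma inverse_one_minus_mult: "inverse (1 - t) * (1 - t) = 1"
  using t_nth_0 by (intro inverse_mult_eq_1) simp

lemma phi_closed_0_eq: "phi_closed t 0 = 1 + fps_X * psi_closed t 0"
  using t_cubic inverse_one_minus_mult by (simp add: psi_closed_def) algebra

lemma psi_closed_Suc_eq:
  "psi_closed t (Suc k) = fps_X * psi_closed t k + fps_X * phi_closed t (Suc (Suc k))"
proof -
  define w where "w = (fps_X * inverse (1 - t) ^ 2) ^ k"
  show ?thesis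
    using inverse_one_minus_mult unfolding psi_closed_def phi_closed.simps power_Suc w_def[symmetric]
    by algebra
qed

lemma phi_closed_Suc_eq:
  "phi_closed t (Suc k) = fps_X * phi_closed t k + fps_X * psi_closed t (Suc k)"
proof (cases k)
  case 0
  show ?thesis
    using t_cubic inverse_one_minus_mult unfolding 0 by (simp add: psi_closed_def) algebra
next
  case (Suc j)
  define w where "w = (fps_X * inverse (1 - t) ^ 2) ^ j"
  show ?thesis
    using t_cubic inverse_one_minus_mult
    unfolding Suc psi_closed_def phi_closed.simps power_Suc w_def[symmetric] lucas_U.simps(3)
    by algebra
qed

lemma t_power_factor:
  "t ^ Suc k = fps_X ^ (2 * k + 1) * (1 - t)
     * ((fps_X * inverse (1 - t) ^ 2) ^ k * fps_X ^ 2 * inverse (1 - t) ^ 3)"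
proof -
  define a where "a = (fps_X ^ 2 :: 'a fps) ^ k"
  define b where "b = (fps_X * inverse (1 - t) ^ 2) ^ k"
  have "fps_X ^ 2 * (fps_X * inverse (1 - t) ^ 2) = t"
    using t_cubic inverse_one_minus_mult by algebra
  then have "t ^ Suc k = t * (a * b)"
    unfolding a_def b_def by (metis power_Suc power_mult_distrib)
  also have "\<dots> = a * fps_X * (1 - t) * (b * fps_X ^ 2 * inverse (1 - t) ^ 3)"
    using t_cubic inverse_one_minus_mult by algebra
  finally show ?thesis
    unfolding power_add power_mult a_def b_def by simp
qed

lemma psi_closed_eq_divide:
  "psi_closed t k
     = t ^ Suc k / (fps_X ^ (2 * k + 1) * (1 - t)) * lucas_U (2 - t) ((1 - t) ^ 2) (Suc k)"
  and denominator_dvd: "fps_X ^ (2 * k + 1) * (1 - t) dvd t ^ Suc k"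
proof -
  have "fps_X ^ (2 * k + 1) * (1 - t) \<noteq> 0"
    using t_nth_0 by (auto dest: arg_cong[of _ _ "\<lambda>f. fps_nth f 0"])
  then show "psi_closed t k
     = t ^ Suc k / (fps_X ^ (2 * k + 1) * (1 - t)) * lucas_U (2 - t) ((1 - t) ^ 2) (Suc k)"
    unfolding t_power_factor psi_closed_def by simp
  show "fps_X ^ (2 * k + 1) * (1 - t) dvd t ^ Suc k"
    unfolding t_power_factor by simp
qed

end

lemma psi_0_eq: "psi 0 = fps_X * phi 1"
proof (rule fps_ext)
  show "fps_nth (psi 0) n = fps_nth (fps_X * phi 1) n" for n
    by (cases n) (simp_all add: phi_def psi_def)
qed

lemma psi_Suc_eq: "psi (Suc k) = fps_X * psi k + fps_X * phi (Suc (Suc k))"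
proof (rule fps_ext)
  show "fps_nth (psi (Suc k)) n = fps_nth (fps_X * psi k + fps_X * phi (Suc (Suc k))) n" for n
    by (cases n) (simp_all add: phi_def psi_def)
qed

lemma phi_Suc_eq: "phi (Suc k) = psi k / fps_X - (if k = 0 then 0 else psi (k - 1))"
proof (cases k)
  case 0
  then show ?thesis
    by (simp only: psi_0_eq nonzero_mult_div_cancel_left[OF fps_X_neq_zero]) simp
next
  case (Suc j)
  then show ?thesis
    by (simp only: psi_Suc_eq distrib_left[symmetric]
        nonzero_mult_div_cancel_left[OF fps_X_neq_zero]) simp
qed

lemma phi_psi_closed_forms:
  fixes t :: "real fps"
  assumes "fps_X ^ 3 = t * (1 - t) ^ 2" and "fps_nth t 0 = 0"
  shows "phi = phi_closed t" and "psi = psi_closed t"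
  using phi_psi_eqI[OF phi_closed_0_eq[OF assms] phi_closed_Suc_eq[OF assms]
      psi_closed_0_eq psi_closed_Suc_eq[OF assms]]
  by simp_all

lemma psi_fps_compose:
  fixes t c m2 m3 :: "real fps"
  assumes t_cubic: "fps_X ^ 3 = t * (1 - t) ^ 2" and t_nth_0: "fps_nth t 0 = 0"
    and c_nth_0: "fps_nth c 0 = 0" and "c \<noteq> 0"
    and roots: "m2 + m3 = 2 - (t oo c)" "m2 * m3 = (1 - (t oo c)) ^ 2" and "m2 \<noteq> m3"
  shows "psi k oo c = (t oo c) ^ (k + 1) / (c ^ (2 * k + 1) * (1 - (t oo c)))
           * ((m3 ^ (k + 1) - m2 ^ (k + 1)) / (m3 - m2))"
proof -
  have denominator_oo: "(fps_X ^ (2 * k + 1) * (1 - t)) oo c = c ^ (2 * k + 1) * (1 - (t oo c))"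
    using c_nth_0 by (simp add: fps_compose_mult_distrib fps_compose_sub_distrib flip: fps_compose_power)
  have "c ^ (2 * k + 1) * (1 - (t oo c)) \<noteq> 0"
    using \<open>c \<noteq> 0\<close> t_nth_0 by (auto dest: arg_cong[of _ _ "\<lambda>f. fps_nth f 0"])
  then have quotient_oo: "(t ^ Suc k / (fps_X ^ (2 * k + 1) * (1 - t))) oo c
      = (t oo c) ^ Suc k / (c ^ (2 * k + 1) * (1 - (t oo c)))"
    using fps_compose_divide_distrib[OF denominator_dvd[OF t_cubic t_nth_0, of k] c_nth_0]
    unfolding denominator_oo fps_compose_power[OF c_nth_0] by simp
  have "lucas_U (2 - t) ((1 - t) ^ 2) (Suc k) oo c = lucas_U (m2 + m3) (m2 * m3) (Suc k)"
    using c_nth_0 by (simp add: lucas_U_fps_compose roots fps_compose_sub_distrib flip: fps_compose_power)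
  also have "\<dots> = (m3 - m2) * lucas_U (m2 + m3) (m2 * m3) (Suc k) / (m3 - m2)"
    using \<open>m2 \<noteq> m3\<close> by simp
  also have "\<dots> = (m3 ^ Suc k - m2 ^ Suc k) / (m3 - m2)"
    by (simp only: lucas_U_roots)
  finally show ?thesis
    unfolding phi_psi_closed_forms(2)[OF t_cubic t_nth_0] psi_closed_eq_divide[OF t_cubic t_nth_0]
      fps_compose_mult_distrib[OF c_nth_0] quotient_oo by simp
qed

theorem mainTheorem7:
  fixes t :: "real fps" and k :: nat
  assumes t_eq: "fps_X ^ 3 = t * (1 - t)^2"
    and t_init: "\<forall>n<6. fps_nth t n = (if n = 3 then 1 else 0)"
  shows "(psi k = t ^ (k + 1) / (fps_X ^ (2 * k + 1) * (1 - t)) *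
           (\<Sum>i = 0..k div 2. (-1) ^ i * of_nat ((k - i) choose i)
               * (2 - t) ^ (k - 2 * i) * (1 - t) ^ (2 * i)))
    \<and> (\<forall>m2 m3 :: real fps.
           m2 + m3 = 2 - fps_compose t (fps_X ^ 2)
         \<and> m2 * m3 = (1 - fps_compose t (fps_X ^ 2))^2
         \<and> m2 \<noteq> m3
         \<longrightarrow> fps_compose (psi k) (fps_X ^ 2) =
              fps_compose t (fps_X ^ 2) ^ (k + 1)
                / ((fps_X ^ 2) ^ (2 * k + 1) * (1 - fps_compose t (fps_X ^ 2)))
              * ((m3 ^ (k + 1) - m2 ^ (k + 1)) / (m3 - m2)))
    \<and> phi 0 = inverse (1 - t)
    \<and> (1 \<le> k \<longrightarrow>
           phi k = psi (k - 1) / fps_X - (if 2 \<le> k then psi (k - 2) else 0))"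
proof -
  \<comment> \<open>Only the constant term of \<open>t\<close> is used; the cubic equation fixes the rest.\<close>
  have t_nth_0: "fps_nth t 0 = 0"
    using t_init by simp
  have "psi k = t ^ (k + 1) / (fps_X ^ (2 * k + 1) * (1 - t)) *
           (\<Sum>i = 0..k div 2. (-1) ^ i * of_nat ((k - i) choose i)
               * (2 - t) ^ (k - 2 * i) * (1 - t) ^ (2 * i))"
    unfolding phi_psi_closed_forms(2)[OF t_eq t_nth_0] psi_closed_eq_divide[OF t_eq t_nth_0]
      lucas_U_eq_sum power_mult by simp
  moreover have "phi 0 = inverse (1 - t)"
    by (simp add: phi_psi_closed_forms(1)[OF t_eq t_nth_0])
  moreover have "phi k = psi (k - 1) / fps_X - (if 2 \<le> k then psi (k - 2) else 0)" if "1 \<le> k"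
    using that phi_Suc_eq[of "k - 1"] by (cases k) auto
  moreover have "fps_nth (fps_X ^ 2 :: real fps) 0 = 0" and "(fps_X ^ 2 :: real fps) \<noteq> 0"
    by simp_all
  ultimately show ?thesis
    using psi_fps_compose[OF t_eq t_nth_0] by blast
qed

end
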